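(* For all record types $\rho_1,\rho_2\in\mathbb{T}_R$: $\rho_1+\rho_2=\rho_1\cap\rho_2$ if and only if $\rho_1+\rho_2\le\rho_1$.
   Context: $\mathbb{T}\ni\sigma ::= a\mid\omega\mid\sigma_1\to\sigma_2\mid\sigma_1\cap\sigma_2\mid\rho$ and record types $\mathbb{T}_R\ni\rho ::= \langle\rangle\mid\langle l:\sigma\rangle\mid\rho_1+\rho_2\mid\rho_1\cap\rho_2$. Subtyping $\le$ is the least preorder with: $\sigma\le\omega$; $\omega\le\omega\to\omega$; $\sigma\cap\tau\le\sigma$; $\sigma\cap\tau\le\tau$; $\sigma\le\tau_1,\sigma\le\tau_2\Rightarrow\sigma\le\tau_1\cap\tau_2$; $(\sigma\to\tau_1)\cap(\sigma\to\tau_2)\le\sigma\to\tau_1\cap\tau_2$; $\sigma_2\le\sigma_1,\tau_1\le\tau_2\Rightarrow\sigma_1\to\tau_1\le\sigma_2\to\tau_2$; $\langle l:\sigma\rangle\le\langle\rangle$; $\langle l:\sigma\rangle\cap\langle l:\tau\rangle\le\langle l:\sigma\cap\tau\rangle$; $\sigma\le\tau\Rightarrow\langle l:\sigma\rangle\le\langle l:\tau\rangle$; $\rho+\langle\rangle=\langle\rangle+\rho=\rho$; $(\rho_1+\rho_2)+\rho_3=\rho_1+(\rho_2+\rho_3)$; $(\rho_1\cap\rho_2)+\rho_3=(\rho_1+\rho_3)\cap(\rho_2+\rho_3)$; $\langle l:\sigma\rangle+(\langle l:\tau\rangle\cap\rho)=\langle l:\tau\rangle\cap\rho$; $\langle l:\sigma\rangle+(\langle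 l':\tau\rangle\cap\rho)=\langle l':\tau\rangle\cap(\langle l:\sigma\rangle+\rho)$ if $l\neq l'$; $\rho_1\le\rho_2\Rightarrow\rho_1+\rho\le\rho_2+\rho$; $\rho_1=\rho_2\Rightarrow\rho+\rho_1=\rho+\rho_2$. $=$ means $\le$ in both directions. *)

theory Defs
  imports Main
begin

text \<open>Types over atoms 'a and labels 'l. Record types are the subset
  recognised by is_rec; well-formed types (the set T) by wf.\<close>

datatype ('a, 'l) ty =
    Atom 'a
  | Omega
  | Arrow "('a, 'l) ty" "('a, 'l) ty"
  | Inter "('a, 'l) ty" "('a, 'l) ty"
  | EmptyRec
  | Field 'l "('a, 'l) ty"
  | Plus "('a, 'l) ty" "('a, 'l) ty"

fun wf :: "('a, 'l) ty \<Rightarrow> bool" and is_rec :: "('a, 'l) ty \<Rightarrow> bool" where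
  "wf (Atom a) = True"
| "wf Omega = True"
| "wf (Arrow s t) = (wf s \<and> wf t)"
| "wf (Inter s t) = (wf s \<and> wf t)"
| "wf EmptyRec = True"
| "wf (Field l s) = wf s"
| "wf (Plus r1 r2) = (is_rec r1 \<and> is_rec r2)"
| "is_rec EmptyRec = True"
| "is_rec (Field l s) = wf s"
| "is_rec (Plus r1 r2) = (is_rec r1 \<and> is_rec r2)"
| "is_rec (Inter r1 r2) = (is_rec r1 \<and> is_rec r2)"
| "is_rec (Atom a) = False"
| "is_rec Omega = False"
| "is_rec (Arrow s t) = False"

inductive sub :: "('a, 'l) ty \<Rightarrow> ('a, 'l) ty \<Rightarrow> bool" where
  refl: "wf s \<Longrightarrow> sub s s"
| trans: "sub s t \<Longrightarrow> sub t u \<Longrightarrow> sub s u"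
| top: "wf s \<Longrightarrow> sub s Omega"
| omega_arr: "sub Omega (Arrow Omega Omega)"
| inter_l: "wf s \<Longrightarrow> wf t \<Longrightarrow> sub (Inter s t) s"
| inter_r: "wf s \<Longrightarrow> wf t \<Longrightarrow> sub (Inter s t) t"
| inter_glb: "sub s t1 \<Longrightarrow> sub s t2 \<Longrightarrow> sub s (Inter t1 t2)"
| arr_inter: "wf s \<Longrightarrow> wf t1 \<Longrightarrow> wf t2 \<Longrightarrow>
     sub (Inter (Arrow s t1) (Arrow s t2)) (Arrow s (Inter t1 t2))"
| arr: "sub s2 s1 \<Longrightarrow> sub t1 t2 \<Longrightarrow> sub (Arrow s1 t1) (Arrow s2 t2)"
| field_empty: "wf s \<Longrightarrow> sub (Field l s) EmptyRec"
| field_inter: "wf s \<Longrightarrow> wf t \<Longrightarrow> sub (Inter (Field l s) (Field l t)) (Field l (Inter s t))"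
| field_mono: "sub s t \<Longrightarrow> sub (Field l s) (Field l t)"
| plus_empty_r1: "is_rec r \<Longrightarrow> sub (Plus r EmptyRec) r"
| plus_empty_r2: "is_rec r \<Longrightarrow> sub r (Plus r EmptyRec)"
| plus_empty_l1: "is_rec r \<Longrightarrow> sub (Plus EmptyRec r) r"
| plus_empty_l2: "is_rec r \<Longrightarrow> sub r (Plus EmptyRec r)"
| plus_assoc1: "is_rec r1 \<Longrightarrow> is_rec r2 \<Longrightarrow> is_rec r3 \<Longrightarrow>
     sub (Plus (Plus r1 r2) r3) (Plus r1 (Plus r2 r3))"
| plus_assoc2: "is_rec r1 \<Longrightarrow> is_rec r2 \<Longrightarrow> is_rec r3 \<Longrightarrow>
     sub (Plus r1 (Plus r2 r3)) (Plus (Plus r1 r2) r3)"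
| plus_distr1: "is_rec r1 \<Longrightarrow> is_rec r2 \<Longrightarrow> is_rec r3 \<Longrightarrow>
     sub (Plus (Inter r1 r2) r3) (Inter (Plus r1 r3) (Plus r2 r3))"
| plus_distr2: "is_rec r1 \<Longrightarrow> is_rec r2 \<Longrightarrow> is_rec r3 \<Longrightarrow>
     sub (Inter (Plus r1 r3) (Plus r2 r3)) (Plus (Inter r1 r2) r3)"
| plus_same1: "wf s \<Longrightarrow> wf t \<Longrightarrow> is_rec r \<Longrightarrow>
     sub (Plus (Field l s) (Inter (Field l t) r)) (Inter (Field l t) r)"
| plus_same2: "wf s \<Longrightarrow> wf t \<Longrightarrow> is_rec r \<Longrightarrow>
     sub (Inter (Field l t) r) (Plus (Field l s) (Inter (Field l t) r))"
| plus_diff1: "l \<noteq> l' \<Longrightarrow> wf s \<Longrightarrow> wf t \<Longrightarrow> is_rec r \<Longrightarrow>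
     sub (Plus (Field l s) (Inter (Field l' t) r)) (Inter (Field l' t) (Plus (Field l s) r))"
| plus_diff2: "l \<noteq> l' \<Longrightarrow> wf s \<Longrightarrow> wf t \<Longrightarrow> is_rec r \<Longrightarrow>
     sub (Inter (Field l' t) (Plus (Field l s) r)) (Plus (Field l s) (Inter (Field l' t) r))"
| plus_mono_l: "sub r1 r2 \<Longrightarrow> is_rec r1 \<Longrightarrow> is_rec r2 \<Longrightarrow> is_rec r \<Longrightarrow>
     sub (Plus r1 r) (Plus r2 r)"
| plus_cong_r: "sub r1 r2 \<Longrightarrow> sub r2 r1 \<Longrightarrow> is_rec r1 \<Longrightarrow> is_rec r2 \<Longrightarrow> is_rec r \<Longrightarrow>
     sub (Plus r r1) (Plus r r2)"

end

theory Submission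
  imports Defs
begin

text \<open>Every record type is equivalent to a finite intersection of fields
  \<open>\<langle>l\<^sub>1:\<sigma>\<^sub>1\<rangle> \<inter> \<dots> \<inter> \<langle>l\<^sub>n:\<sigma>\<^sub>n\<rangle>\<close>, and on such normal forms \<open>\<rho>\<^sub>1 + \<rho>\<^sub>2\<close> is
  the intersection of the fields of \<open>\<rho>\<^sub>2\<close> with those fields of \<open>\<rho>\<^sub>1\<close> whose
  label does not occur in \<open>\<rho>\<^sub>2\<close>. Hence always \<open>\<rho>\<^sub>1 \<inter> \<rho>\<^sub>2 \<le> \<rho>\<^sub>1 + \<rho>\<^sub>2 \<le> \<rho>\<^sub>2\<close>,
  so \<open>\<rho>\<^sub>1 + \<rho>\<^sub>2 \<le> \<rho>\<^sub>1\<close> already forces \<open>\<rho>\<^sub>1 + \<rho>\<^sub>2 \<le> \<rho>\<^sub>1 \<inter> \<rho>\<^sub>2\<close>.\<close>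

lemma is_rec_imp_wf: "is_rec r \<Longrightarrow> wf r"
  by (induct r) auto

lemma sub_imp_wf: "sub s t \<Longrightarrow> wf s \<and> wf t"
  by (induct rule: sub.induct) (auto simp: is_rec_imp_wf)

declare sub.trans [trans]

lemma sub_Inter_mono: "sub a a' \<Longrightarrow> sub b b' \<Longrightarrow> sub (Inter a b) (Inter a' b')"
  by (meson sub.inter_glb sub.inter_l sub.inter_r sub.trans sub_imp_wf)

definition sub_eq :: "('a, 'l) ty \<Rightarrow> ('a, 'l) ty \<Rightarrow> bool" where
  "sub_eq s t \<longleftrightarrow> sub s t \<and> sub t s"

lemma sub_eq_refl: "wf s \<Longrightarrow> sub_eq s s"
  unfolding sub_eq_def by (simp add: sub.refl)

lemma sub_eq_trans [trans]: "sub_eq s t \<Longrightarrow> sub_eq t u \<Longrightarrow> sub_eq s u"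
  unfolding sub_eq_def by (meson sub.trans)

lemma sub_eq_Inter: "sub_eq a a' \<Longrightarrow> sub_eq b b' \<Longrightarrow> sub_eq (Inter a b) (Inter a' b')"
  unfolding sub_eq_def by (simp add: sub_Inter_mono)

lemma sub_eq_Plus:
  assumes "sub_eq a a'" "sub_eq b b'" "is_rec a" "is_rec a'" "is_rec b" "is_rec b'"
  shows "sub_eq (Plus a b) (Plus a' b')"
proof -
  have "sub_eq (Plus a b) (Plus a' b)"
    using assms by (auto simp: sub_eq_def intro: sub.plus_mono_l)
  moreover have "sub_eq (Plus a' b) (Plus a' b')"
    using assms by (auto simp: sub_eq_def intro: sub.plus_cong_r)
  ultimately show ?thesis by (rule sub_eq_trans)
qed

fun fields_rec :: "('l \<times> ('a, 'l) ty) list \<Rightarrow> ('a, 'l) ty" where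
  "fields_rec [] = EmptyRec"
| "fields_rec ((l, s) # xs) = Inter (Field l s) (fields_rec xs)"

definition wf_fields :: "('l \<times> ('a, 'l) ty) list \<Rightarrow> bool" where
  "wf_fields xs \<longleftrightarrow> (\<forall>(l, s) \<in> set xs. wf s)"

lemma wf_fields_simps [simp]:
  "wf_fields []"
  "wf_fields ((l, s) # xs) \<longleftrightarrow> wf s \<and> wf_fields xs"
  "wf_fields (xs @ ys) \<longleftrightarrow> wf_fields xs \<and> wf_fields ys"
  by (auto simp: wf_fields_def)

lemma is_rec_fields_rec: "wf_fields xs \<Longrightarrow> is_rec (fields_rec xs)"
  by (induct xs) auto

lemma wf_fields_rec: "wf_fields xs \<Longrightarrow> wf (fields_rec xs)"
  by (simp add: is_rec_fields_rec is_rec_imp_wf)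

lemma fields_rec_sub_EmptyRec: "wf_fields xs \<Longrightarrow> sub (fields_rec xs) EmptyRec"
proof (induct xs)
  case Nil
  then show ?case by (simp add: sub.refl)
next
  case (Cons p xs)
  obtain l s where p: "p = (l, s)" by fastforce
  have "sub (fields_rec (p # xs)) (Field l s)"
    using Cons p by (simp add: sub.inter_l wf_fields_rec)
  then show ?case
    using Cons p by (meson sub.field_empty sub.trans wf_fields_simps(2))
qed

lemma fields_rec_sub_Field:
  "wf_fields xs \<Longrightarrow> (l, s) \<in> set xs \<Longrightarrow> sub (fields_rec xs) (Field l s)"
proof (induct xs)
  case Nil
  then show ?case by simp
next
  case (Cons p xs)
  obtain l' s' where p: "p = (l', s')" by fastforce
  show ?case
  proof (cases "(l, s) = p")
    case True
    then show ?thesis using Cons p by (simp add: sub.inter_l wf_fields_rec)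
  next
    case False
    then have "sub (fields_rec xs) (Field l s)" using Cons p by auto
    moreover have "sub (fields_rec (p # xs)) (fields_rec xs)"
      using Cons p by (simp add: sub.inter_r wf_fields_rec)
    ultimately show ?thesis by (meson sub.trans)
  qed
qed

lemma sub_fields_recI:
  "sub t EmptyRec \<Longrightarrow> (\<And>l s. (l, s) \<in> set ys \<Longrightarrow> sub t (Field l s)) \<Longrightarrow> sub t (fields_rec ys)"
  by (induct ys rule: fields_rec.induct) (auto intro: sub.inter_glb)

lemma fields_rec_subset:
  "wf_fields xs \<Longrightarrow> set ys \<subseteq> set xs \<Longrightarrow> sub (fields_rec xs) (fields_rec ys)"
  by (rule sub_fields_recI) (auto simp: fields_rec_sub_EmptyRec fields_rec_sub_Field)

lemma Inter_fields_rec: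
  assumes "wf_fields xs" "wf_fields ys"
  shows "sub_eq (Inter (fields_rec xs) (fields_rec ys)) (fields_rec (xs @ ys))"
proof -
  have wf: "wf (fields_rec xs)" "wf (fields_rec ys)"
    using assms by (simp_all add: wf_fields_rec)
  have "sub (Inter (fields_rec xs) (fields_rec ys)) (fields_rec (xs @ ys))"
  proof (rule sub_fields_recI)
    show "sub (Inter (fields_rec xs) (fields_rec ys)) EmptyRec"
      using assms wf by (meson fields_rec_sub_EmptyRec sub.inter_l sub.trans)
    fix l s assume "(l, s) \<in> set (xs @ ys)"
    then show "sub (Inter (fields_rec xs) (fields_rec ys)) (Field l s)"
      using assms wf fields_rec_sub_Field sub.inter_l sub.inter_r sub.trans
      by (metis Un_iff set_append)
  qed
  moreover have "sub (fields_rec (xs @ ys)) (Inter (fields_rec xs) (fields_rec ys))"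
    using assms by (auto intro!: sub.inter_glb fields_rec_subset)
  ultimately show ?thesis by (simp add: sub_eq_def)
qed

lemma Field_sub_eq_fields_rec: "wf s \<Longrightarrow> sub_eq (Field l s) (fields_rec [(l, s)])"
  by (auto simp: sub_eq_def intro!: sub.inter_glb sub.refl sub.field_empty sub.inter_l)


fun add_field :: "'l \<Rightarrow> ('a, 'l) ty \<Rightarrow> ('l \<times> ('a, 'l) ty) list \<Rightarrow> ('l \<times> ('a, 'l) ty) list" where
  "add_field l s [] = [(l, s)]"
| "add_field l s (p # ys) = (if l = fst p then p # ys else p # add_field l s ys)"

lemma set_add_field: "set ys \<subseteq> set (add_field l s ys) \<and> set (add_field l s ys) \<subseteq> insert (l, s) (set ys)"
  by (induct ys) auto

lemma wf_fields_add_field: "wf s \<Longrightarrow> wf_fields ys \<Longrightarrow> wf_fields (add_field l s ys)"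
  using set_add_field[of ys l s] by (auto simp: wf_fields_def)

lemma Plus_Field_fields_rec:
  "wf s \<Longrightarrow> wf_fields ys \<Longrightarrow> sub_eq (Plus (Field l s) (fields_rec ys)) (fields_rec (add_field l s ys))"
proof (induct ys)
  case Nil
  then have "sub_eq (Plus (Field l s) EmptyRec) (Field l s)"
    by (auto simp: sub_eq_def intro: sub.plus_empty_r1 sub.plus_empty_r2)
  then show ?case
    using Nil Field_sub_eq_fields_rec sub_eq_trans by fastforce
next
  case (Cons p ys)
  obtain l' t where p: "p = (l', t)" by fastforce
  have wf: "wf t" "wf_fields ys" "is_rec (fields_rec ys)"
    using Cons p by (simp_all add: is_rec_fields_rec)
  show ?case
  proof (cases "l = l'")
    case True
    then show ?thesis
      using Cons p wf by (auto simp: sub_eq_def intro: sub.plus_same1 sub.plus_same2)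
  next
    case False
    have "sub_eq (Plus (Field l s) (fields_rec (p # ys)))
        (Inter (Field l' t) (Plus (Field l s) (fields_rec ys)))"
      using Cons p wf False by (auto simp: sub_eq_def intro: sub.plus_diff1 sub.plus_diff2)
    also have "sub_eq \<dots> (fields_rec (add_field l s (p # ys)))"
      using Cons p wf False by (simp add: sub_eq_Inter sub_eq_refl)
    finally show ?thesis .
  qed
qed

text \<open>Repeated fields are harmless under intersection, so merging may simply mirror
  the rule \<open>(\<rho>\<^sub>1 \<inter> \<rho>\<^sub>2) + \<rho>\<^sub>3 = (\<rho>\<^sub>1 + \<rho>\<^sub>3) \<inter> (\<rho>\<^sub>2 + \<rho>\<^sub>3)\<close>.\<close>

fun merge_fields :: "('l \<times> ('a, 'l) ty) list \<Rightarrow> ('l \<times> ('a, 'l) ty) list \<Rightarrow> ('l \<times> ('a, 'l) ty) list" where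
  "merge_fields [] ys = ys"
| "merge_fields ((l, s) # xs) ys = add_field l s ys @ merge_fields xs ys"

lemma set_merge_fields:
  "set ys \<subseteq> set (merge_fields xs ys) \<and> set (merge_fields xs ys) \<subseteq> set xs \<union> set ys"
  using set_add_field by (induct xs ys rule: merge_fields.induct) fastforce+

lemma wf_fields_merge_fields: "wf_fields xs \<Longrightarrow> wf_fields ys \<Longrightarrow> wf_fields (merge_fields xs ys)"
  using set_merge_fields[of ys xs] by (auto simp: wf_fields_def)

lemma Plus_fields_rec:
  "wf_fields xs \<Longrightarrow> wf_fields ys \<Longrightarrow>
   sub_eq (Plus (fields_rec xs) (fields_rec ys)) (fields_rec (merge_fields xs ys))"
proof (induct xs ys rule: merge_fields.induct)
  case (1 ys)
  then show ?case
    by (auto simp: sub_eq_def is_rec_fields_rec intro: sub.plus_empty_l1 sub.plus_empty_l2)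
next
  case (2 l s xs ys)
  then have wf: "wf s" "wf_fields xs" by simp_all
  have "sub_eq (Plus (fields_rec ((l, s) # xs)) (fields_rec ys))
      (Inter (Plus (Field l s) (fields_rec ys)) (Plus (fields_rec xs) (fields_rec ys)))"
    using 2 wf by (auto simp: sub_eq_def is_rec_fields_rec intro: sub.plus_distr1 sub.plus_distr2)
  also have "sub_eq \<dots> (Inter (fields_rec (add_field l s ys)) (fields_rec (merge_fields xs ys)))"
    using 2 wf by (simp add: sub_eq_Inter Plus_Field_fields_rec)
  also have "sub_eq \<dots> (fields_rec (merge_fields ((l, s) # xs) ys))"
    using 2 wf by (simp add: Inter_fields_rec wf_fields_add_field wf_fields_merge_fields)
  finally show ?case .
qed

lemma record_normal_form: "is_rec r \<Longrightarrow> \<exists>xs. wf_fields xs \<and> sub_eq r (fields_rec xs)"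
proof (induct r)
  case EmptyRec
  then show ?case by (metis fields_rec.simps(1) sub_eq_refl wf.simps(5) wf_fields_simps(1))
next
  case (Field l s)
  then show ?case
    using Field_sub_eq_fields_rec[of s l] by (intro exI[of _ "[(l, s)]"]) simp
next
  case (Inter a b)
  then obtain xs ys where "wf_fields xs" "sub_eq a (fields_rec xs)"
    and "wf_fields ys" "sub_eq b (fields_rec ys)" by auto
  then show ?case by (metis Inter_fields_rec sub_eq_Inter sub_eq_trans wf_fields_simps(3))
next
  case (Plus a b)
  then obtain xs ys where xs: "wf_fields xs" "sub_eq a (fields_rec xs)"
    and ys: "wf_fields ys" "sub_eq b (fields_rec ys)" by auto
  then have "sub_eq (Plus a b) (Plus (fields_rec xs) (fields_rec ys))"
    using Plus by (simp add: sub_eq_Plus is_rec_fields_rec)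
  then show ?case
    using xs ys by (metis Plus_fields_rec sub_eq_trans wf_fields_merge_fields)
qed auto

lemma Plus_sub_right:
  assumes "is_rec r1" "is_rec r2"
  shows "sub (Plus r1 r2) r2"
proof -
  obtain xs ys where xs: "wf_fields xs" "sub_eq r1 (fields_rec xs)"
    and ys: "wf_fields ys" "sub_eq r2 (fields_rec ys)"
    using assms record_normal_form by metis
  have "sub (Plus r1 r2) (fields_rec (merge_fields xs ys))"
    using assms xs ys by (meson Plus_fields_rec is_rec_fields_rec sub_eq_Plus sub_eq_trans sub_eq_def)
  also have "sub \<dots> (fields_rec ys)"
    using xs ys by (simp add: fields_rec_subset set_merge_fields wf_fields_merge_fields)
  also have "sub \<dots> r2"
    using ys by (simp add: sub_eq_def)
  finally show ?thesis .
qed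

lemma Inter_sub_Plus:
  assumes "is_rec r1" "is_rec r2"
  shows "sub (Inter r1 r2) (Plus r1 r2)"
proof -
  obtain xs ys where xs: "wf_fields xs" "sub_eq r1 (fields_rec xs)"
    and ys: "wf_fields ys" "sub_eq r2 (fields_rec ys)"
    using assms record_normal_form by metis
  have "sub (Inter r1 r2) (fields_rec (xs @ ys))"
    using xs ys by (meson Inter_fields_rec sub_eq_Inter sub_eq_trans sub_eq_def)
  also have "sub \<dots> (fields_rec (merge_fields xs ys))"
    using xs ys set_merge_fields[of ys xs] by (simp add: fields_rec_subset)
  also have "sub \<dots> (Plus r1 r2)"
    using assms xs ys by (meson Plus_fields_rec is_rec_fields_rec sub_eq_Plus sub_eq_trans sub_eq_def)
  finally show ?thesis .
qed

theorem lemma3p9: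
  fixes r1 r2 :: "('a, 'l) ty"
  assumes "is_rec r1" and "is_rec r2"
  shows "(sub (Plus r1 r2) (Inter r1 r2) \<and> sub (Inter r1 r2) (Plus r1 r2))
         \<longleftrightarrow> sub (Plus r1 r2) r1"
proof
  assume "sub (Plus r1 r2) (Inter r1 r2) \<and> sub (Inter r1 r2) (Plus r1 r2)"
  then show "sub (Plus r1 r2) r1"
    using assms by (meson is_rec_imp_wf sub.inter_l sub.trans)
next
  assume "sub (Plus r1 r2) r1"
  then show "sub (Plus r1 r2) (Inter r1 r2) \<and> sub (Inter r1 r2) (Plus r1 r2)"
    using Plus_sub_right[OF assms] Inter_sub_Plus[OF assms] by (simp add: sub.inter_glb)
qed

end
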